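(* Let $(E,\tau)$ be a locally solid vector lattice, where $\tau$ is a Fatou topology. Suppose that $C_\tau=E$ (which holds in particular when $E$ has the countable sup property, when $C_\tau$ has a countable order basis, or when $\tau$ is metrisable). Then every $\tau$-convergent net in $E$ has an embedded sequence that is uo-convergent to the same limit.
   Context: All vector lattices are real and Archimedean; linear topologies are Hausdorff. A locally solid topology on a vector lattice is a linear topology such that zero has a neighbourhood basis of solid sets. A net $(x_\alpha)$ order converges to $x$ if there is a net $y_\beta\downarrow0$ such that for each $\beta_0$ eventually $|x_\alpha-x|\leq y_{\beta_0}$; it uo-converges to $x$ if $|x_\alpha-x|\wedge|y|$ order converges to $0$ for every $y\in E$. A set is order closed if it contains the order limits of its nets. A Fatou topology is a locally solid topology in which zero has a neighbourhood basis of order closed solid sets. A sequence $(V_n)$ of neighbourhoods of zero is normal if $V_{n+1}+V_{n+1}\subseteq V_n$; the carrier $C_\tau$ is the union of the disjoint complements $N^{\mathrm d}$ where $N=\bigcap_nV_n$ ranges over intersections of normal sequences of solid $\tau$-neighbourhoods of zero. An order basis of a vector lattice $G$ is a non-empty $A\subseteq G$ with $A^{\mathrm d}=\{0\}$. $E$ has the countable sup property if every subset with a supremum contains an at most countable subset with the same supremum. Embedded sequence: given a net $(x_\alpha)_{\alpha\in A}$, a sequence $(x_{\alpha_n})_{n\geq1}$ with $\alpha_1\leq\alpha_2\leq\dotsb$, strictly increasing when $A$ has no largest element. *)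

theory Defs
  imports "HOL-Analysis.Analysis" "HOL-Library.Lattice_Algebras"
begin

definition vabs :: "'a::{ordered_real_vector, lattice_ab_group_add} \<Rightarrow> 'a" where
  "vabs x = sup x (- x)"

definition archimedean_vl :: "'a::{ordered_real_vector, lattice_ab_group_add} itself \<Rightarrow> bool" where
  "archimedean_vl _ \<longleftrightarrow>
     (\<forall>x y :: 'a. 0 \<le> x \<and> (\<forall>n::nat. real n *\<^sub>R x \<le> y) \<longrightarrow> x = 0)"

definition directed_on :: "'i set \<Rightarrow> ('i \<Rightarrow> 'i \<Rightarrow> bool) \<Rightarrow> bool" where
  "directed_on D le \<longleftrightarrow> D \<noteq> {} \<and> (\<forall>a\<in>D. le a a) \<and>
     (\<forall>a\<in>D. \<forall>b\<in>D. \<forall>c\<in>D. le a b \<and> le b c \<longrightarrow> le a c) \<and>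
     (\<forall>a\<in>D. \<forall>b\<in>D. \<exists>c\<in>D. le a c \<and> le b c)"

definition is_infimum :: "'a::order set \<Rightarrow> 'a \<Rightarrow> bool" where
  "is_infimum S m \<longleftrightarrow> (\<forall>s\<in>S. m \<le> s) \<and> (\<forall>z. (\<forall>s\<in>S. z \<le> s) \<longrightarrow> z \<le> m)"

text \<open>The dominating nets are indexed by directed sets whose elements lie in the type of E
  itself; this is no loss of generality (a decreasing net can be reindexed by its range).\<close>
definition net_decr_to_zero :: "'a set \<Rightarrow> ('a \<Rightarrow> 'a \<Rightarrow> bool) \<Rightarrow> ('a \<Rightarrow> 'a::{ordered_real_vector, lattice_ab_group_add}) \<Rightarrow> bool" where
  "net_decr_to_zero B lb y \<longleftrightarrow> directed_on B lb \<and>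
     (\<forall>b\<in>B. \<forall>b'\<in>B. lb b b' \<longrightarrow> y b' \<le> y b) \<and> is_infimum (y ` B) 0"

definition order_conv :: "'i set \<Rightarrow> ('i \<Rightarrow> 'i \<Rightarrow> bool) \<Rightarrow> ('i \<Rightarrow> 'a::{ordered_real_vector, lattice_ab_group_add}) \<Rightarrow> 'a \<Rightarrow> bool" where
  "order_conv D le x l \<longleftrightarrow> (\<exists>B lb y. net_decr_to_zero B lb y \<and>
     (\<forall>b0\<in>B. \<exists>a0\<in>D. \<forall>a\<in>D. le a0 a \<longrightarrow> vabs (x a - l) \<le> y b0))"

definition uo_conv :: "'i set \<Rightarrow> ('i \<Rightarrow> 'i \<Rightarrow> bool) \<Rightarrow> ('i \<Rightarrow> 'a::{ordered_real_vector, lattice_ab_group_add}) \<Rightarrow> 'a \<Rightarrow> bool" where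
  "uo_conv D le x l \<longleftrightarrow> (\<forall>y. order_conv D le (\<lambda>a. inf (vabs (x a - l)) (vabs y)) 0)"

text \<open>Nets are indexed by
  directed sets with elements in the type of E (no loss of generality: any order convergent
  net in A yields one indexed by the dominating set with the same limit).\<close>
definition order_closed :: "'a::{ordered_real_vector, lattice_ab_group_add} set \<Rightarrow> bool" where
  "order_closed A \<longleftrightarrow> (\<forall>(D::'a set) le x l. directed_on D le \<and> (\<forall>a\<in>D. x a \<in> A)
       \<and> order_conv D le x l \<longrightarrow> l \<in> A)"

definition solid :: "'a::{ordered_real_vector, lattice_ab_group_add} set \<Rightarrow> bool" where
  "solid S \<longleftrightarrow> (\<forall>x y. y \<in> S \<and> vabs x \<le> vabs y \<longrightarrow> x \<in> S)"

definition nhd0 :: "'a topology \<Rightarrow> 'a::zero set \<Rightarrow> bool" where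
  "nhd0 T V \<longleftrightarrow> (\<exists>U. openin T U \<and> 0 \<in> U \<and> U \<subseteq> V)"

definition linear_topology :: "'a::real_vector topology \<Rightarrow> bool" where
  "linear_topology T \<longleftrightarrow> topspace T = UNIV \<and> Hausdorff_space T \<and>
     continuous_map (prod_topology T T) T (\<lambda>(x, y). x + y) \<and>
     continuous_map (prod_topology euclideanreal T) T (\<lambda>(c, x). c *\<^sub>R x)"

definition locally_solid :: "'a::{ordered_real_vector, lattice_ab_group_add} topology \<Rightarrow> bool" where
  "locally_solid T \<longleftrightarrow> linear_topology T \<and>
     (\<forall>V. nhd0 T V \<longrightarrow> (\<exists>W. nhd0 T W \<and> solid W \<and> W \<subseteq> V))"

definition fatou_topology :: "'a::{ordered_real_vector, lattice_ab_group_add} topology \<Rightarrow> bool" where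
  "fatou_topology T \<longleftrightarrow> locally_solid T \<and>
     (\<forall>V. nhd0 T V \<longrightarrow> (\<exists>W. nhd0 T W \<and> solid W \<and> order_closed W \<and> W \<subseteq> V))"

definition disj_compl :: "'a::{ordered_real_vector, lattice_ab_group_add} set \<Rightarrow> 'a set" where
  "disj_compl N = {x. \<forall>z\<in>N. inf (vabs x) (vabs z) = 0}"

definition normal_solid_seq :: "'a::{ordered_real_vector, lattice_ab_group_add} topology \<Rightarrow> (nat \<Rightarrow> 'a set) \<Rightarrow> bool" where
  "normal_solid_seq T V \<longleftrightarrow> (\<forall>n. nhd0 T (V n) \<and> solid (V n) \<and>
      {a + b | a b. a \<in> V (Suc n) \<and> b \<in> V (Suc n)} \<subseteq> V n)"

definition carrier_top :: "'a::{ordered_real_vector, lattice_ab_group_add} topology \<Rightarrow> 'a set" where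
  "carrier_top T = (\<Union>V \<in> {V. normal_solid_seq T V}. disj_compl (\<Inter>n. V n))"

definition net_tends :: "'a topology \<Rightarrow> 'i set \<Rightarrow> ('i \<Rightarrow> 'i \<Rightarrow> bool) \<Rightarrow> ('i \<Rightarrow> 'a) \<Rightarrow> 'a \<Rightarrow> bool" where
  "net_tends T D le x l \<longleftrightarrow> (\<forall>U. openin T U \<and> l \<in> U \<longrightarrow>
      (\<exists>a0\<in>D. \<forall>a\<in>D. le a0 a \<longrightarrow> x a \<in> U))"

definition embedded_seq_idx :: "'i set \<Rightarrow> ('i \<Rightarrow> 'i \<Rightarrow> bool) \<Rightarrow> (nat \<Rightarrow> 'i) \<Rightarrow> bool" where
  "embedded_seq_idx D le \<alpha> \<longleftrightarrow> (\<forall>n. \<alpha> n \<in> D \<and> le (\<alpha> n) (\<alpha> (Suc n))) \<and>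
     ((\<not> (\<exists>m\<in>D. \<forall>a\<in>D. le a m)) \<longrightarrow> (\<forall>n. \<not> le (\<alpha> (Suc n)) (\<alpha> n)))"

end

theory Submission
  imports Defs
begin

text \<open>If \<open>D\<close> has a largest index \<open>m\<close>, then \<open>x m = l\<close> and the constant sequence works.
  Otherwise choose indices \<open>\<alpha> 0 < \<alpha> 1 < \<dots>\<close> and Fatou neighbourhoods \<open>U 0, U 1, \<dots>\<close>
  alternately, such that \<open>z k = x (\<alpha> k) - l \<in> U k\<close>, \<open>U (j+1) + U (j+1) \<subseteq> U j\<close>, and \<open>U j\<close>
  lies in the \<open>j\<close>-th member of a normal sequence witnessing \<open>z k \<in> C\<^sub>\<tau>\<close> for every \<open>k < j\<close>.
  Then every \<open>z k\<close> is disjoint from \<open>N = \<Inter>j. U j\<close>.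

  Fix \<open>y\<close>, put \<open>a k = |z k| \<sqinter> |y|\<close> and let \<open>w \<ge> 0\<close> lie below every eventual upper bound
  of \<open>a\<close>. Then \<open>w \<in> U n\<close> for all \<open>n\<close>: it is the order limit, as \<open>m \<rightarrow> \<infinity>\<close>, of
  \<open>w \<sqinter> (\<Sum>k\<in>{n<..<m}. a k)\<close>, which lies in the order closed set \<open>U n\<close>. Also \<open>w\<close> is disjoint
  from \<open>N\<close>, because every \<open>a k\<close> is. Hence \<open>w \<sqinter> w = 0\<close>, so \<open>w = 0\<close> and \<open>a\<close> order
  converges to \<open>0\<close>. Both steps use the Archimedean property in the form: a positive lower
  bound of a family that is stable under \<open>v \<mapsto> (v - d)\<^sup>+\<close> is disjoint from \<open>d\<close>.\<close>

section \<open>Positive parts and disjointness\<close>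

lemma vabs_nonneg: "0 \<le> vabs x"
proof -
  have "x + - x \<le> vabs x + vabs x"
    unfolding vabs_def by (intro add_mono) auto
  then show ?thesis by simp
qed

lemma vabs_of_nonneg: "0 \<le> x \<Longrightarrow> vabs x = x"
  unfolding vabs_def by (rule sup_absorb1) (meson neg_le_0_iff_le order.trans)

lemma vabs_minus: "vabs (- x) = vabs x"
  unfolding vabs_def by (simp add: sup_commute)

lemma solid_mem_if_le_vabs: "solid S \<Longrightarrow> b \<in> S \<Longrightarrow> 0 \<le> a \<Longrightarrow> a \<le> vabs b \<Longrightarrow> a \<in> S"
  unfolding solid_def by (metis vabs_of_nonneg)

lemma inf_eq_diff_pprt: "inf w s = w - pprt (w - s)"
  for w s :: "'a::lattice_ab_group_add"
proof -
  have "w - pprt (w - s) = w + inf (s - w) 0"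
    unfolding pprt_def by (simp add: diff_sup_eq_inf)
  also have "\<dots> = inf s w" by (simp add: add_inf_distrib_left)
  finally show ?thesis by (simp add: inf_commute)
qed

lemma pprt_diff_eq_diff_inf: "pprt (a - d) = a - inf a d"
  for a d :: "'a::lattice_ab_group_add"
  unfolding pprt_def by (simp add: diff_inf_eq_sup add_sup_distrib_left sup_commute)

lemma inf_pprt_pprt_minus: "inf (pprt x) (pprt (- x)) = 0"
  for x :: "'a::lattice_ab_group_add"
proof -
  have "pprt (- x) = pprt x - x"
    using pprt_neg[of x] prts[of x] by (simp add: algebra_simps)
  then have "inf (pprt x) (pprt (- x)) = pprt x + inf 0 (- x)"
    by (simp add: add_inf_distrib_left)
  also have "\<dots> = pprt x - sup 0 x" by (simp add: neg_sup_eq_inf[symmetric])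
  finally show ?thesis by (simp add: pprt_def sup_commute)
qed

lemma pprt_pprt_diff: "0 \<le> d \<Longrightarrow> pprt (pprt x - d) = pprt (x - d)"
  for x d :: "'a::lattice_ab_group_add"
proof -
  assume "0 \<le> d"
  have "sup (sup x 0 - d) 0 = sup (x - d) (sup (- d) 0)"
    using add_sup_distrib_right[of x 0 "- d"] by (simp add: sup_assoc)
  also have "sup (- d) 0 = 0" using \<open>0 \<le> d\<close> by (simp add: sup_absorb2)
  finally show ?thesis unfolding pprt_def by simp
qed

lemma le_pprt_diff_if_disjoint: "inf a d = 0 \<Longrightarrow> a \<le> v \<Longrightarrow> a \<le> pprt (v - d)"
  for a d v :: "'a::lattice_ab_group_add"
proof -
  assume "inf a d = 0" "a \<le> v"
  then have "a = pprt (a - d)" by (simp add: pprt_diff_eq_diff_inf)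
  also have "\<dots> \<le> pprt (v - d)" using \<open>a \<le> v\<close> by (simp add: diff_right_mono)
  finally show ?thesis .
qed

lemma le_pprt_diff_swap:
  fixes a u w v :: "'a::lattice_ab_group_add"
  assumes "0 \<le> a" "0 \<le> u" "u \<le> pprt (w - a)" "a \<le> v" "w \<le> v"
  shows "a \<le> pprt (v - u)"
proof -
  define p q where "p = pprt (w - a)" and "q = pprt (a - w)"
  have "inf u q \<le> inf p q" using assms(3) unfolding p_def[symmetric] by (rule inf_mono) simp
  also have "\<dots> = 0" unfolding p_def q_def using inf_pprt_pprt_minus[of "w - a"] by simp
  finally have uq: "inf u q = 0" using assms(2) by (simp add: q_def order.antisym)
  have "a = w - p + q"
    unfolding p_def q_def using prts[of "w - a"] pprt_neg[of "w - a"] by (simp add: algebra_simps)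
  also have "\<dots> \<le> v - u + q" using assms by (simp add: p_def diff_mono)
  finally have "a \<le> inf (v + (q - u)) (v + 0)" using assms by (simp add: algebra_simps)
  also have "\<dots> = v + inf (q - u) 0" by (simp add: add_inf_distrib_left)
  also have "inf (q - u) 0 = - pprt (u - q)" unfolding pprt_def by (simp add: neg_sup_eq_inf)
  also have "pprt (u - q) = u" using uq by (simp add: pprt_diff_eq_diff_inf)
  finally have "a \<le> v - u" by simp
  then show ?thesis by (simp add: pprt_def le_supI1)
qed

lemma scaleR_inf_distrib: "0 \<le> c \<Longrightarrow> c *\<^sub>R inf a b = inf (c *\<^sub>R a) (c *\<^sub>R b)"
  for a b :: "'a::{ordered_real_vector, lattice_ab_group_add}"
proof (cases "c = 0")
  case False
  assume "0 \<le> c"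
  with False have c: "0 < c" by simp
  show ?thesis
  proof (rule order.antisym)
    show "c *\<^sub>R inf a b \<le> inf (c *\<^sub>R a) (c *\<^sub>R b)"
      using c by (simp add: scaleR_left_mono)
    have "inverse c *\<^sub>R inf (c *\<^sub>R a) (c *\<^sub>R b) \<le> inf a b"
      using c scaleR_left_mono[OF inf_le1[of "c *\<^sub>R a" "c *\<^sub>R b"], of "inverse c"]
        scaleR_left_mono[OF inf_le2[of "c *\<^sub>R a" "c *\<^sub>R b"], of "inverse c"] by simp
    from scaleR_left_mono[OF this, of c] c
    show "inf (c *\<^sub>R a) (c *\<^sub>R b) \<le> c *\<^sub>R inf a b" by simp
  qed
qed simp

lemma inf_scaleR_eq_0:
  fixes a b :: "'a::{ordered_real_vector, lattice_ab_group_add}"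
  assumes "0 \<le> a" "0 \<le> b" "inf a b = 0" "0 \<le> c"
  shows "inf a (c *\<^sub>R b) = 0"
proof -
  define c' where "c' = max 1 c"
  have "a \<le> c' *\<^sub>R a" "c *\<^sub>R b \<le> c' *\<^sub>R b"
    using assms scaleR_right_mono[of 1 c' a] scaleR_right_mono[of c c' b] by (auto simp: c'_def)
  then have "inf a (c *\<^sub>R b) \<le> inf (c' *\<^sub>R a) (c' *\<^sub>R b)" by (rule inf_mono)
  also have "\<dots> = 0"
    using assms scaleR_inf_distrib[of c' a b] by (simp add: c'_def)
  finally show ?thesis
    using assms by (simp add: order.antisym scaleR_nonneg_nonneg)
qed

section \<open>The Archimedean property\<close>

lemma eq_0_if_le_pprt_diff_multiples:
  fixes u y :: "'a::{ordered_real_vector, lattice_ab_group_add}"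
  assumes arch: "archimedean_vl TYPE('a)" and "0 \<le> y" "0 \<le> u"
    and le: "\<And>j::nat. u \<le> pprt (y - real j *\<^sub>R u)"
  shows "u = 0"
proof -
  have "real j *\<^sub>R u \<le> y" for j
  proof -
    define q where "q = pprt (real j *\<^sub>R u - y)"
    have "inf u q \<le> inf (pprt (y - real j *\<^sub>R u)) (pprt (- (y - real j *\<^sub>R u)))"
      unfolding q_def using le[of j] by (rule inf_mono) simp
    also have "\<dots> = 0" by (rule inf_pprt_pprt_minus)
    finally have "inf q u = 0"
      using assms by (simp add: q_def inf_commute order.antisym)
    then have "inf q (real j *\<^sub>R u) = 0"
      using assms by (intro inf_scaleR_eq_0) (auto simp: q_def)
    moreover have "q \<le> real j *\<^sub>R u"
      unfolding q_def using assms pprt_mono[of "real j *\<^sub>R u - y" "real j *\<^sub>R u"]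
      by (simp add: scaleR_nonneg_nonneg)
    ultimately have "q = 0" by (simp add: inf_absorb1)
    then show ?thesis by (simp add: q_def flip: le_zero_iff_zero_pprt)
  qed
  then show ?thesis using arch assms unfolding archimedean_vl_def by blast
qed

lemma inf_eq_0_if_below_pprt_diff_closed:
  fixes w d y :: "'a::{ordered_real_vector, lattice_ab_group_add}"
  assumes arch: "archimedean_vl TYPE('a)" and "y \<in> P" "0 \<le> y" "0 \<le> w" "0 \<le> d"
    and below: "\<And>v. v \<in> P \<Longrightarrow> w \<le> v"
    and closed: "\<And>v. v \<in> P \<Longrightarrow> pprt (v - d) \<in> P"
  shows "inf w d = 0"
proof -
  have multiples: "pprt (y - real j *\<^sub>R d) \<in> P" for j
  proof (induction j)
    case 0
    then show ?case using assms by simp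
  next
    case (Suc j)
    have "pprt (pprt (y - real j *\<^sub>R d) - d) = pprt (y - real (Suc j) *\<^sub>R d)"
      using \<open>0 \<le> d\<close> by (simp add: pprt_pprt_diff algebra_simps)
    then show ?case using closed[OF Suc] by simp
  qed
  have "inf w d \<le> pprt (y - real j *\<^sub>R inf w d)" for j
  proof -
    have "inf w d \<le> pprt (y - real j *\<^sub>R d)"
      using below[OF multiples] by (simp add: le_infI1)
    also have "\<dots> \<le> pprt (y - real j *\<^sub>R inf w d)"
      by (intro pprt_mono diff_left_mono scaleR_left_mono) auto
    finally show ?thesis .
  qed
  then show ?thesis
    using eq_0_if_le_pprt_diff_multiples[OF arch] assms by simp
qed

section \<open>Unbounded order convergence along normal sequences\<close>

lemma sum_mem_if_normal:
  fixes U :: "nat \<Rightarrow> 'a::comm_monoid_add set"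
  assumes U0: "\<And>j. 0 \<in> U j"
    and normal: "\<And>j p q. p \<in> U (Suc j) \<Longrightarrow> q \<in> U (Suc j) \<Longrightarrow> p + q \<in> U j"
    and c: "\<And>k. c k \<in> U k"
  shows "sum c {Suc n..<m} \<in> U n"
proof -
  have "sum c {Suc n..<Suc n + L} \<in> U n" for L
  proof (induction L arbitrary: n)
    case 0
    then show ?case using U0 by simp
  next
    case (Suc L)
    have "sum c {Suc n..<Suc n + Suc L} = c (Suc n) + sum c {Suc (Suc n)..<Suc (Suc n) + L}"
      by (subst sum.atLeast_Suc_lessThan) auto
    then show ?case using normal[OF c Suc.IH] by simp
  qed
  from this[of "m - Suc n"] show ?thesis
    by (cases "m \<le> Suc n") (auto simp: U0)
qed

definition tail_bounds :: "(nat \<Rightarrow> 'a::{ordered_real_vector, lattice_ab_group_add}) \<Rightarrow> 'a set" where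
  "tail_bounds a = {v. 0 \<le> v \<and> (\<forall>\<^sub>F k in sequentially. a k \<le> v)}"

lemma order_conv_zero_if_tail_bounds:
  fixes a :: "nat \<Rightarrow> 'a::{ordered_real_vector, lattice_ab_group_add}"
  assumes a0: "\<And>k. 0 \<le> a k" and bounded: "tail_bounds a \<noteq> {}"
    and only_zero: "\<And>w. 0 \<le> w \<Longrightarrow> (\<And>v. v \<in> tail_bounds a \<Longrightarrow> w \<le> v) \<Longrightarrow> w = 0"
  shows "order_conv UNIV (\<le>) a 0"
  unfolding order_conv_def
proof (intro exI conjI)
  show "net_decr_to_zero (tail_bounds a) (\<lambda>v v'. v' \<le> v) id"
    unfolding net_decr_to_zero_def directed_on_def is_infimum_def
  proof (intro conjI ballI allI impI)
    fix p q assume "p \<in> tail_bounds a" "q \<in> tail_bounds a"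
    then show "\<exists>r\<in>tail_bounds a. r \<le> p \<and> r \<le> q"
      by (intro bexI[of _ "inf p q"]) (auto simp: tail_bounds_def eventually_conj)
  next
    fix z assume "\<forall>v\<in>id ` tail_bounds a. z \<le> v"
    then have "sup z 0 = 0"
      by (intro only_zero) (auto simp: tail_bounds_def)
    then show "z \<le> 0" by (metis sup.cobounded1)
  qed (use bounded in \<open>auto simp: tail_bounds_def\<close>)
  show "\<forall>v\<in>tail_bounds a. \<exists>K\<in>UNIV. \<forall>k\<in>UNIV. K \<le> k \<longrightarrow> vabs (a k - 0) \<le> id v"
    by (auto simp: tail_bounds_def eventually_sequentially vabs_of_nonneg a0)
qed

lemma order_closed_mem_if_decreasing_gap:
  fixes t :: "nat \<Rightarrow> 'a::{ordered_real_vector, lattice_ab_group_add}"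
  assumes "order_closed A" "decseq t" "is_infimum (range t) 0" "\<And>m. w - t m \<in> A"
  shows "w \<in> A"
proof -
  have t0: "0 \<le> t m" for m using assms(3) by (simp add: is_infimum_def)
  (* order_closed only admits nets indexed by sets of lattice elements, so index by range t. *)
  have dir: "directed_on (range t) (\<lambda>p q. q \<le> p)"
    unfolding directed_on_def
  proof (intro conjI ballI)
    fix p q assume "p \<in> range t" "q \<in> range t"
    then obtain i j where "p = t i" "q = t j" by auto
    then show "\<exists>r\<in>range t. r \<le> p \<and> r \<le> q"
      using assms(2) by (intro bexI[of _ "t (max i j)"]) (auto simp: decseqD)
  qed auto
  have "order_conv (range t) (\<lambda>p q. q \<le> p) (\<lambda>v. w - v) w"
    unfolding order_conv_def
  proof (intro exI conjI)
    show "net_decr_to_zero (range t) (\<lambda>p q. q \<le> p) id"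
      unfolding net_decr_to_zero_def using dir assms(3) by auto
    show "\<forall>p\<in>range t. \<exists>q\<in>range t. \<forall>r\<in>range t. r \<le> q \<longrightarrow> vabs (w - r - w) \<le> id p"
      using t0 by (auto simp: vabs_minus vabs_of_nonneg)
  qed
  then show ?thesis
    using assms(1,4) dir unfolding order_closed_def by blast
qed

lemma is_infimum_pprt_diff_partial_sums:
  fixes a :: "nat \<Rightarrow> 'a::{ordered_real_vector, lattice_ab_group_add}"
  assumes arch: "archimedean_vl TYPE('a)" and a0: "\<And>k. 0 \<le> a k"
    and bounded: "tail_bounds a \<noteq> {}"
    and w0: "0 \<le> w" and below: "\<And>v. v \<in> tail_bounds a \<Longrightarrow> w \<le> v"
  shows "is_infimum (range (\<lambda>m. pprt (w - sum a {n..<m}))) 0"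
  unfolding is_infimum_def
proof (intro conjI allI impI ballI)
  fix z assume "\<forall>t\<in>range (\<lambda>m. pprt (w - sum a {n..<m})). z \<le> t"
  then have zt: "sup z 0 \<le> pprt (w - sum a {n..<m})" for m by auto
  obtain y where y: "y \<in> tail_bounds a" using bounded by blast
  have "inf w (sup z 0) = 0"
  proof (rule inf_eq_0_if_below_pprt_diff_closed[OF arch y _ w0 _ below])
    fix v assume "v \<in> tail_bounds a"
    then obtain K where K: "\<And>k. K \<le> k \<Longrightarrow> a k \<le> v" and "0 \<le> v"
      by (auto simp: tail_bounds_def eventually_sequentially)
    have "a k \<le> pprt (v - sup z 0)" if "max K n \<le> k" for k
    proof (rule le_pprt_diff_swap[OF a0 _ _ K below])
      have "a k \<le> sum a {n..<Suc k}"
        using that a0 sum_mono2[of "{n..<Suc k}" "{k}" a] by auto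
      then have "pprt (w - sum a {n..<Suc k}) \<le> pprt (w - a k)"
        by (intro pprt_mono diff_left_mono)
      then show "sup z 0 \<le> pprt (w - a k)" using zt order.trans by blast
    qed (use that \<open>v \<in> tail_bounds a\<close> in auto)
    then show "pprt (v - sup z 0) \<in> tail_bounds a"
      unfolding tail_bounds_def eventually_sequentially
      by (intro CollectI conjI exI[of _ "max K n"]) auto
  qed (use y in \<open>auto simp: tail_bounds_def\<close>)
  moreover have "sup z 0 \<le> w" using zt[of n] w0 by simp
  ultimately have "sup z 0 = 0" by (simp add: inf_absorb2)
  then show "z \<le> 0" by (metis sup.cobounded1)
qed auto

lemma mem_normal_if_below_tail_bounds:
  fixes a :: "nat \<Rightarrow> 'a::{ordered_real_vector, lattice_ab_group_add}"
  assumes arch: "archimedean_vl TYPE('a)"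
    and solid: "\<And>j. solid (U j)" and closed: "\<And>j. order_closed (U j)" and U0: "\<And>j. 0 \<in> U j"
    and normal: "\<And>j p q. p \<in> U (Suc j) \<Longrightarrow> q \<in> U (Suc j) \<Longrightarrow> p + q \<in> U j"
    and aU: "\<And>k. a k \<in> U k" and a0: "\<And>k. 0 \<le> a k" and bounded: "tail_bounds a \<noteq> {}"
    and w0: "0 \<le> w" and below: "\<And>v. v \<in> tail_bounds a \<Longrightarrow> w \<le> v"
  shows "w \<in> U n"
proof (rule order_closed_mem_if_decreasing_gap[OF closed])
  define s where "s m = sum a {Suc n..<m}" for m
  have s0: "0 \<le> s m" for m unfolding s_def by (intro sum_nonneg a0)
  show "decseq (\<lambda>m. pprt (w - s m))"
    unfolding s_def using a0
    by (intro decseq_SucI pprt_mono diff_left_mono sum_mono2) auto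
  show "is_infimum (range (\<lambda>m. pprt (w - s m))) 0"
    unfolding s_def by (rule is_infimum_pprt_diff_partial_sums) (use assms in auto)
  show "w - pprt (w - s m) \<in> U n" for m
  proof -
    have "s m \<in> U n" unfolding s_def by (rule sum_mem_if_normal[OF U0 normal aU])
    then have "inf w (s m) \<in> U n"
      by (rule solid_mem_if_le_vabs[OF solid]) (auto simp: w0 s0 vabs_of_nonneg le_infI2)
    then show ?thesis by (simp add: inf_eq_diff_pprt)
  qed
qed

lemma disjoint_if_below_tail_bounds:
  fixes a :: "nat \<Rightarrow> 'a::{ordered_real_vector, lattice_ab_group_add}"
  assumes arch: "archimedean_vl TYPE('a)"
    and bounded: "tail_bounds a \<noteq> {}"
    and w0: "0 \<le> w" and below: "\<And>v. v \<in> tail_bounds a \<Longrightarrow> w \<le> v"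
    and "0 \<le> p" and disjoint: "\<And>k. inf (a k) p = 0"
  shows "inf w p = 0"
proof -
  obtain y where y: "y \<in> tail_bounds a" using bounded by blast
  show ?thesis
  proof (rule inf_eq_0_if_below_pprt_diff_closed[OF arch y _ w0 \<open>0 \<le> p\<close> below])
    fix v assume "v \<in> tail_bounds a"
    then show "pprt (v - p) \<in> tail_bounds a"
      unfolding tail_bounds_def
      by (auto elim: eventually_mono intro: le_pprt_diff_if_disjoint[OF disjoint])
  qed (use y in \<open>auto simp: tail_bounds_def\<close>)
qed

lemma uo_conv_if_mem_normal_order_closed:
  fixes x :: "nat \<Rightarrow> 'a::{ordered_real_vector, lattice_ab_group_add}"
  assumes arch: "archimedean_vl TYPE('a)"
    and solid: "\<And>j. solid (U j)" and closed: "\<And>j. order_closed (U j)" and U0: "\<And>j. 0 \<in> U j"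
    and normal: "\<And>j p q. p \<in> U (Suc j) \<Longrightarrow> q \<in> U (Suc j) \<Longrightarrow> p + q \<in> U j"
    and xU: "\<And>k. x k - l \<in> U k" and xN: "\<And>k. x k - l \<in> disj_compl (\<Inter>j. U j)"
  shows "uo_conv UNIV (\<le>) x l"
  unfolding uo_conv_def
proof
  fix y
  define a where "a = (\<lambda>k. inf (vabs (x k - l)) (vabs y))"
  have a0: "0 \<le> a k" for k by (simp add: a_def vabs_nonneg)
  have aU: "a k \<in> U k" for k
    by (rule solid_mem_if_le_vabs[OF solid xU a0]) (simp add: a_def)
  have bounded: "tail_bounds a \<noteq> {}"
    by (auto simp: tail_bounds_def a_def vabs_nonneg intro!: exI[of _ "vabs y"])
  have "order_conv UNIV (\<le>) a 0"
  proof (rule order_conv_zero_if_tail_bounds[OF a0 bounded])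
    fix w assume w0: "0 \<le> w" and below: "\<And>v. v \<in> tail_bounds a \<Longrightarrow> w \<le> v"
    have "w \<in> U n" for n
      by (rule mem_normal_if_below_tail_bounds[OF arch solid closed U0 normal aU a0 bounded w0 below])
    then have "inf (vabs (x k - l)) (vabs w) = 0" for k
      using xN[of k] unfolding disj_compl_def by blast
    then have "inf (a k) w = 0" for k
      using w0 a0[of k] inf_mono[of "a k" "vabs (x k - l)" w w]
      by (simp add: a_def vabs_of_nonneg order.antisym)
    then have "inf w w = 0"
      using disjoint_if_below_tail_bounds[OF arch bounded w0 below w0] by blast
    then show "w = 0" by simp
  qed
  then show "order_conv UNIV (\<le>) (\<lambda>k. inf (vabs (x k - l)) (vabs y)) 0"
    unfolding a_def .
qed

lemma uo_conv_const: "uo_conv UNIV (\<le>) (\<lambda>_::nat. l) l"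
  unfolding uo_conv_def
proof
  fix y :: 'a
  have "tail_bounds (\<lambda>_::nat. 0::'a) = {v. 0 \<le> v}"
    by (simp add: tail_bounds_def)
  then have "order_conv UNIV (\<le>) (\<lambda>_::nat. 0::'a) 0"
    by (intro order_conv_zero_if_tail_bounds) (auto intro: order.antisym)
  then show "order_conv UNIV (\<le>) (\<lambda>_::nat. inf (vabs (l - l)) (vabs y)) 0"
    by (simp add: vabs_of_nonneg vabs_nonneg inf_absorb1)
qed

section \<open>Neighbourhoods of zero and nets\<close>

lemma nhd0_Int: "nhd0 T A \<Longrightarrow> nhd0 T B \<Longrightarrow> nhd0 T (A \<inter> B)"
  unfolding nhd0_def by (meson Int_mono IntI openin_Int)

lemma nhd0_UNIV: "linear_topology T \<Longrightarrow> nhd0 T UNIV"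
  unfolding nhd0_def linear_topology_def using openin_topspace[of T] by auto

lemma nhd0_half:
  fixes T :: "'a::real_vector topology"
  assumes lt: "linear_topology T" and V: "nhd0 T V"
  obtains W where "nhd0 T W" "\<forall>p\<in>W. \<forall>q\<in>W. p + q \<in> V"
proof -
  obtain U where U: "openin T U" "0 \<in> U" "U \<subseteq> V" using V unfolding nhd0_def by blast
  have "openin (prod_topology T T) {z \<in> topspace (prod_topology T T). (\<lambda>(p, q). p + q) z \<in> U}"
    by (rule openin_continuous_map_preimage) (use lt U(1) in \<open>auto simp: linear_topology_def\<close>)
  then have "openin (prod_topology T T) {z. fst z + snd z \<in> U}"
    using lt by (simp add: linear_topology_def case_prod_beta)
  moreover have "(0, 0) \<in> {z. fst z + snd z \<in> U}" using U by simp
  ultimately obtain A B where AB: "openin T A" "openin T B" "0 \<in> A" "0 \<in> B"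
    "A \<times> B \<subseteq> {z. fst z + snd z \<in> U}"
    unfolding openin_prod_topology_alt by meson
  show ?thesis
  proof
    show "nhd0 T (A \<inter> B)"
      unfolding nhd0_def using AB by (intro exI[of _ "A \<inter> B"] conjI openin_Int) auto
    show "\<forall>p\<in>A \<inter> B. \<forall>q\<in>A \<inter> B. p + q \<in> V"
    proof (intro ballI)
      fix p q assume "p \<in> A \<inter> B" "q \<in> A \<inter> B"
      then have "(p, q) \<in> A \<times> B" by simp
      then have "(p, q) \<in> {z. fst z + snd z \<in> U}" by (rule subsetD[OF AB(5)])
      then show "p + q \<in> V" using U(3) by auto
    qed
  qed
qed

lemma net_tends_diff_nhd0:
  fixes T :: "'a::real_vector topology"
  assumes lt: "linear_topology T" and nt: "net_tends T D le x l" and V: "nhd0 T V"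
  shows "\<exists>a0\<in>D. \<forall>a\<in>D. le a0 a \<longrightarrow> x a - l \<in> V"
proof -
  obtain U where U: "openin T U" "0 \<in> U" "U \<subseteq> V" using V unfolding nhd0_def by blast
  have top: "topspace T = UNIV" and add: "continuous_map (prod_topology T T) T (\<lambda>(p, q). p + q)"
    using lt unfolding linear_topology_def by auto
  have "continuous_map T (prod_topology T T) (\<lambda>z. (z, - l))"
    by (intro continuous_map_pairedI) (auto simp: top)
  from continuous_map_compose[OF this add] have "continuous_map T T (\<lambda>z. z - l)"
    by (simp add: o_def)
  from openin_continuous_map_preimage[OF this U(1)] have "openin T {z. z - l \<in> U}"
    using top by simp
  moreover have "l \<in> {z. z - l \<in> U}" using U by simp
  ultimately have "\<exists>a0\<in>D. \<forall>a\<in>D. le a0 a \<longrightarrow> x a \<in> {z. z - l \<in> U}"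
    by (intro nt[unfolded net_tends_def, rule_format] conjI)
  then show ?thesis using U(3) by auto
qed

lemma net_tends_largest_index:
  assumes "Hausdorff_space T" "topspace T = UNIV" "net_tends T D le x l"
    and "m \<in> D" "\<forall>a\<in>D. le a m"
  shows "x m = l"
proof (rule ccontr)
  assume "x m \<noteq> l"
  then obtain U V where "openin T U" "openin T V" "l \<in> U" "x m \<in> V" "disjnt U V"
    using assms(1,2) unfolding Hausdorff_space_def by (metis UNIV_I)
  moreover obtain a0 where "a0 \<in> D" "\<forall>a\<in>D. le a0 a \<longrightarrow> x a \<in> U"
    using assms(3)[unfolded net_tends_def, rule_format, OF conjI, OF \<open>openin T U\<close> \<open>l \<in> U\<close>]
    by blast
  ultimately show False using assms(4,5) unfolding disjnt_def by blast
qed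

lemma net_tends_strictly_later_index:
  fixes T :: "'a::real_vector topology"
  assumes lt: "linear_topology T" and dir: "directed_on D le"
    and no_largest: "\<not> (\<exists>m\<in>D. \<forall>a\<in>D. le a m)"
    and nt: "net_tends T D le x l" and U: "nhd0 T U" and "a \<in> D"
  shows "\<exists>b\<in>D. le a b \<and> \<not> le b a \<and> x b - l \<in> U"
proof -
  obtain c where c: "c \<in> D" "\<not> le c a" using no_largest \<open>a \<in> D\<close> by blast
  obtain a0 where a0: "a0 \<in> D" "\<forall>b\<in>D. le a0 b \<longrightarrow> x b - l \<in> U"
    using net_tends_diff_nhd0[OF lt nt U] by blast
  obtain d where d: "d \<in> D" "le a d" "le c d"
    using dir c \<open>a \<in> D\<close> unfolding directed_on_def by blast
  obtain b where b: "b \<in> D" "le d b" "le a0 b"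
    using dir d a0 unfolding directed_on_def by blast
  have trans: "\<And>p q r. p \<in> D \<Longrightarrow> q \<in> D \<Longrightarrow> r \<in> D \<Longrightarrow> le p q \<Longrightarrow> le q r \<Longrightarrow> le p r"
    using dir unfolding directed_on_def by blast
  have "le a b" using trans[OF \<open>a \<in> D\<close> d(1) b(1) d(2) b(2)] .
  moreover have "\<not> le b a"
    using trans[OF c(1) d(1) b(1) d(3) b(2)] trans[OF c(1) b(1) \<open>a \<in> D\<close>] c(2) by blast
  ultimately show ?thesis using a0 b by blast
qed

lemma normal_solid_seq_Suc_subset:
  assumes "normal_solid_seq T V"
  shows "V (Suc j) \<subseteq> V j"
proof
  fix p assume "p \<in> V (Suc j)"
  moreover have "0 \<in> V (Suc j)" using assms unfolding normal_solid_seq_def nhd0_def by blast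
  ultimately have "p + 0 \<in> V j" using assms unfolding normal_solid_seq_def by blast
  then show "p \<in> V j" by simp
qed

section \<open>Choosing the embedded sequence\<close>

lemma fatou_topology_linear: "fatou_topology T \<Longrightarrow> linear_topology T"
  unfolding fatou_topology_def locally_solid_def by blast

lemma disj_compl_antimono: "A \<subseteq> B \<Longrightarrow> disj_compl B \<subseteq> disj_compl A"
  unfolding disj_compl_def by blast

lemma Inter_subset_Inter_diagonal:
  fixes U V :: "nat \<Rightarrow> 'a set" and R :: "nat \<Rightarrow> nat \<Rightarrow> 'a set"
  assumes UR: "\<And>n. U (Suc n) \<subseteq> R n (Suc n)" and R_dec: "\<And>n m. R (Suc n) m \<subseteq> R n m"
    and RV: "\<And>m. R k m \<subseteq> V m" and V_dec: "\<And>m. V (Suc m) \<subseteq> V m"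
  shows "(\<Inter>j. U j) \<subseteq> (\<Inter>m. V m)"
proof (intro subsetI INT_I)
  fix p m assume p: "p \<in> (\<Inter>j. U j)"
  define j where "j = max k m"
  have "p \<in> U (Suc j)" using p by blast
  also have "\<dots> \<subseteq> R j (Suc j)" by (rule UR)
  also have "\<dots> \<subseteq> R k (Suc j)"
    using lift_Suc_antimono_le[of "\<lambda>n. R n (Suc j)" k j] R_dec by (simp add: j_def)
  also have "\<dots> \<subseteq> V (Suc j)" by (rule RV)
  also have "\<dots> \<subseteq> V m"
    using lift_Suc_antimono_le[of V m "Suc j"] V_dec by (simp add: j_def)
  finally show "p \<in> V m" .
qed

lemma fatou_nhd_at_later_index:
  fixes T :: "'a::{ordered_real_vector, lattice_ab_group_add} topology"
  assumes fatou: "fatou_topology T" and dir: "directed_on D le"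
    and no_largest: "\<not> (\<exists>m\<in>D. \<forall>a\<in>D. le a m)" and nt: "net_tends T D le x l"
    and W: "nhd0 T W" and R: "nhd0 T R" and a: "a \<in> D"
  obtains a' W' where "a' \<in> D" "le a a'" "\<not> le a' a" "x a' - l \<in> W'"
    and "nhd0 T W'" "solid W'" "order_closed W'" "W' \<subseteq> R"
    and "\<forall>p\<in>W'. \<forall>q\<in>W'. p + q \<in> W"
proof -
  have lt: "linear_topology T" using fatou by (rule fatou_topology_linear)
  obtain H where H: "nhd0 T H" "\<forall>p\<in>H. \<forall>q\<in>H. p + q \<in> W"
    by (rule nhd0_half[OF lt W])
  obtain W' where W': "nhd0 T W'" "solid W'" "order_closed W'" "W' \<subseteq> H \<inter> R"
    using fatou nhd0_Int[OF H(1) R] unfolding fatou_topology_def by blast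
  obtain a' where "a' \<in> D" "le a a'" "\<not> le a' a" "x a' - l \<in> W'"
    using net_tends_strictly_later_index[OF lt dir no_largest nt W'(1) a] by blast
  moreover have "\<forall>p\<in>W'. \<forall>q\<in>W'. p + q \<in> W" using W'(4) H(2) by blast
  ultimately show ?thesis using W' by (intro that) auto
qed

lemma fatou_nhds_along_net_choice:
  fixes T :: "'a::{ordered_real_vector, lattice_ab_group_add} topology"
    and S :: "'a \<Rightarrow> nat \<Rightarrow> 'a set"
  assumes fatou: "fatou_topology T" and dir: "directed_on D le"
    and no_largest: "\<not> (\<exists>m\<in>D. \<forall>a\<in>D. le a m)" and nt: "net_tends T D le x l"
    and S: "\<And>z m. nhd0 T (S z m)"
  obtains \<alpha> U R where "\<forall>n. \<alpha> n \<in> D \<and> le (\<alpha> n) (\<alpha> (Suc n)) \<and> \<not> le (\<alpha> (Suc n)) (\<alpha> n)"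
    and "\<forall>n. nhd0 T (U n) \<and> solid (U n) \<and> order_closed (U n) \<and> x (\<alpha> n) - l \<in> U n"
    and "\<forall>n. \<forall>p\<in>U (Suc n). \<forall>q\<in>U (Suc n). p + q \<in> U n"
    and "\<forall>n. U (Suc n) \<subseteq> R n (Suc n)" and "\<forall>n m. R (Suc n) m \<subseteq> R n m"
    and "\<forall>n m. R n m \<subseteq> S (x (\<alpha> n) - l) m"
proof -
  have lt: "linear_topology T" using fatou by (rule fatou_topology_linear)
  text \<open>A state \<open>(a, W, R)\<close> at stage \<open>n\<close> consists of the index \<open>\<alpha> n\<close>, the neighbourhood
    \<open>U n\<close>, and a sequence \<open>R\<close> lying inside \<open>S (x (\<alpha> k) - l)\<close> for all \<open>k \<le> n\<close>.\<close>
  define P where "P = (\<lambda>(_::nat) (a, W, R).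
    a \<in> D \<and> nhd0 T W \<and> solid W \<and> order_closed W \<and> x a - l \<in> W \<and>
    (\<forall>m. nhd0 T (R m) \<and> R m \<subseteq> S (x a - l) m))"
  define Q where "Q = (\<lambda>n (a, W, R) (a', W', R').
    le a a' \<and> \<not> le a' a \<and> (\<forall>p\<in>W'. \<forall>q\<in>W'. p + q \<in> (W::'a set)) \<and> W' \<subseteq> R (Suc n) \<and>
    (\<forall>m. R' m \<subseteq> R m))"
  have init: "\<exists>st. P 0 st"
  proof -
    obtain W where W: "nhd0 T W" "solid W" "order_closed W"
      using fatou nhd0_UNIV[OF lt] unfolding fatou_topology_def by blast
    obtain a where "a \<in> D" "\<forall>b\<in>D. le a b \<longrightarrow> x b - l \<in> W"
      using net_tends_diff_nhd0[OF lt nt W(1)] by blast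
    moreover have "le a a" using dir \<open>a \<in> D\<close> unfolding directed_on_def by blast
    ultimately show ?thesis
      unfolding P_def using W S by (intro exI[of _ "(a, W, S (x a - l))"]) auto
  qed
  have step: "\<exists>st'. P (Suc n) st' \<and> Q n st st'" if "P n st" for n st
  proof -
    obtain a W R where st: "st = (a, W, R)" by (cases st)
    have "a \<in> D" "nhd0 T W" "nhd0 T (R (Suc n))" and R: "\<And>m. nhd0 T (R m)"
      using that unfolding P_def st by auto
    obtain a' W' where "a' \<in> D" "le a a'" "\<not> le a' a" "x a' - l \<in> W'" "nhd0 T W'" "solid W'"
      "order_closed W'" "W' \<subseteq> R (Suc n)" "\<forall>p\<in>W'. \<forall>q\<in>W'. p + q \<in> W"
      by (rule fatou_nhd_at_later_index[OF fatou dir no_largest nt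
            \<open>nhd0 T W\<close> \<open>nhd0 T (R (Suc n))\<close> \<open>a \<in> D\<close>])
    then have "P (Suc n) (a', W', \<lambda>m. R m \<inter> S (x a' - l) m) \<and>
        Q n st (a', W', \<lambda>m. R m \<inter> S (x a' - l) m)"
      unfolding P_def Q_def st by (auto simp: nhd0_Int R S)
    then show ?thesis by blast
  qed
  from dependent_nat_choice[of P Q, OF init step]
  obtain st where st: "\<And>n. P n (st n) \<and> Q n (st n) (st (Suc n))" by blast
  define \<alpha> U R where "\<alpha> n = fst (st n)" and "U n = fst (snd (st n))" and "R n = snd (snd (st n))"
    for n
  have st_eq: "st n = (\<alpha> n, U n, R n)" for n
    by (simp add: \<alpha>_def U_def R_def)
  have "\<alpha> n \<in> D \<and> nhd0 T (U n) \<and> solid (U n) \<and> order_closed (U n) \<and> x (\<alpha> n) - l \<in> U n \<and>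
      (\<forall>m. R n m \<subseteq> S (x (\<alpha> n) - l) m)" for n
    using st[of n] unfolding st_eq P_def by simp
  moreover have "le (\<alpha> n) (\<alpha> (Suc n)) \<and> \<not> le (\<alpha> (Suc n)) (\<alpha> n) \<and>
      (\<forall>p\<in>U (Suc n). \<forall>q\<in>U (Suc n). p + q \<in> U n) \<and> U (Suc n) \<subseteq> R n (Suc n) \<and>
      (\<forall>m. R (Suc n) m \<subseteq> R n m)" for n
    using st[of n] unfolding st_eq Q_def by simp
  ultimately show ?thesis
    by (intro that[of \<alpha> U R]) simp_all
qed

lemma normal_fatou_nhds_along_net:
  fixes T :: "'a::{ordered_real_vector, lattice_ab_group_add} topology"
  assumes fatou: "fatou_topology T" and carrier: "carrier_top T = UNIV"
    and dir: "directed_on D le" and no_largest: "\<not> (\<exists>m\<in>D. \<forall>a\<in>D. le a m)"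
    and nt: "net_tends T D le x l"
  obtains \<alpha> U where "\<And>n. \<alpha> n \<in> D \<and> le (\<alpha> n) (\<alpha> (Suc n)) \<and> \<not> le (\<alpha> (Suc n)) (\<alpha> n)"
    and "\<And>j. solid (U j) \<and> order_closed (U j) \<and> 0 \<in> U j"
    and "\<And>j p q. p \<in> U (Suc j) \<Longrightarrow> q \<in> U (Suc j) \<Longrightarrow> p + q \<in> U j"
    and "\<And>k. x (\<alpha> k) - l \<in> U k" and "\<And>k. x (\<alpha> k) - l \<in> disj_compl (\<Inter>j. U j)"
proof -
  have "\<forall>z. \<exists>V. normal_solid_seq T V \<and> z \<in> disj_compl (\<Inter>m. V m)"
    using carrier unfolding carrier_top_def by blast
  then obtain S where S: "\<And>z. normal_solid_seq T (S z)" "\<And>z. z \<in> disj_compl (\<Inter>m. S z m)"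
    by metis
  have S_nhd0: "nhd0 T (S z m)" for z m
    using S(1)[of z] unfolding normal_solid_seq_def by blast
  obtain \<alpha> U R where \<alpha>: "\<forall>n. \<alpha> n \<in> D \<and> le (\<alpha> n) (\<alpha> (Suc n)) \<and> \<not> le (\<alpha> (Suc n)) (\<alpha> n)"
    and U: "\<forall>n. nhd0 T (U n) \<and> solid (U n) \<and> order_closed (U n) \<and> x (\<alpha> n) - l \<in> U n"
    and normal: "\<forall>n. \<forall>p\<in>U (Suc n). \<forall>q\<in>U (Suc n). p + q \<in> U n"
    and UR: "\<forall>n. U (Suc n) \<subseteq> R n (Suc n)" and R_dec: "\<forall>n m. R (Suc n) m \<subseteq> R n m"
    and RS: "\<forall>n m. R n m \<subseteq> S (x (\<alpha> n) - l) m"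
    by (rule fatou_nhds_along_net_choice[where S = S, OF fatou dir no_largest nt S_nhd0])
  have "(\<Inter>j. U j) \<subseteq> (\<Inter>m. S (x (\<alpha> k) - l) m)" for k
    by (rule Inter_subset_Inter_diagonal[OF UR[rule_format] R_dec[rule_format] RS[rule_format, of k]
          normal_solid_seq_Suc_subset[OF S(1)]])
  then have "x (\<alpha> k) - l \<in> disj_compl (\<Inter>j. U j)" for k
    using disj_compl_antimono S(2) by blast
  moreover have "0 \<in> U j" for j using U unfolding nhd0_def by blast
  ultimately show ?thesis
    using \<alpha> U normal by (intro that[of \<alpha> U]) simp_all
qed

theorem theorem5p4:
  fixes T :: "'a::{ordered_real_vector, lattice_ab_group_add} topology"
    and D :: "'i set" and le :: "'i \<Rightarrow> 'i \<Rightarrow> bool" and x :: "'i \<Rightarrow> 'a" and l :: 'a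
  assumes "archimedean_vl TYPE('a)"
    and "fatou_topology T"
    and "carrier_top T = UNIV"
    and "directed_on D le"
    and "net_tends T D le x l"
  shows "\<exists>\<alpha>. embedded_seq_idx D le \<alpha> \<and> uo_conv (UNIV :: nat set) (\<le>) (\<lambda>n. x (\<alpha> n)) l"
proof (cases "\<exists>m\<in>D. \<forall>a\<in>D. le a m")
  case True
  then obtain m where m: "m \<in> D" "\<forall>a\<in>D. le a m" by blast
  have "x m = l"
    using net_tends_largest_index[OF _ _ assms(5) m] fatou_topology_linear[OF assms(2)]
    unfolding linear_topology_def by blast
  moreover have "embedded_seq_idx D le (\<lambda>_. m)"
    unfolding embedded_seq_idx_def using m True by auto
  ultimately show ?thesis
    using uo_conv_const[of l] by (intro exI[of _ "\<lambda>_. m"]) simp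
next
  case False
  obtain \<alpha> U where \<alpha>: "\<And>n. \<alpha> n \<in> D \<and> le (\<alpha> n) (\<alpha> (Suc n)) \<and> \<not> le (\<alpha> (Suc n)) (\<alpha> n)"
    and U: "\<And>j. solid (U j) \<and> order_closed (U j) \<and> 0 \<in> U j"
    and normal: "\<And>j p q. p \<in> U (Suc j) \<Longrightarrow> q \<in> U (Suc j) \<Longrightarrow> p + q \<in> U j"
    and xU: "\<And>k. x (\<alpha> k) - l \<in> U k" and xN: "\<And>k. x (\<alpha> k) - l \<in> disj_compl (\<Inter>j. U j)"
    using normal_fatou_nhds_along_net[OF assms(2-4) False assms(5)] by blast
  have "embedded_seq_idx D le \<alpha>"
    unfolding embedded_seq_idx_def using \<alpha> by blast
  moreover have "uo_conv UNIV (\<le>) (\<lambda>n. x (\<alpha> n)) l"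
    using uo_conv_if_mem_normal_order_closed[OF assms(1) _ _ _ normal xU xN] U by blast
  ultimately show ?thesis by blast
qed

end
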